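(* Let $\widehat{X}=X+\epsilon X_0$ and $\widehat{Y}=Y+\epsilon Y_0$ with $X,X_0,Y,Y_0\in\mathbb{R}^{n\times n}$, $Ind(\widehat{X})=1$, be such that the dual group generalized inverse of $\widehat{X}$ exists. Then $\widehat{X}\leq_{D}^{\#}\widehat{Y}$ if and only if $$X\leq^{\#}Y,\qquad X^{\#}X_0+RX= X^{\#}Y_0+RY,\qquad XR+X_0X^{\#}= YR+Y_0X^{\#},$$ where $R=-X^{\#}X_0X^{\#}+(X^{\#})^2X_0(I-XX^{\#})+(I-XX^{\#})X_0(X^{\#})^2$.
   Context: A dual number is $a+\epsilon b$ with $a,b\in\mathbb{R}$, where $\epsilon\neq 0$, $\epsilon^2=0$ and $\epsilon$ commutes with reals. A dual matrix is $A+\epsilon B$ with $A,B$ real; sums and products are computed formally using $\epsilon^2=0$, and equality means equality of real and dual parts. $X^{\#}$ is the group inverse of a real square matrix $X$. For a square dual matrix $\widehat{A}$ of dual index $1$ (i.e., $\{\widehat{A}\widehat{z}\}=\{\widehat{A}^2\widehat{z}\}$ as $\widehat{z}$ ranges over dual vectors), its dual group generalized inverse $\widehat{A}^{\#}$ is the unique dual matrix $\widehat{G}$ (if it exists) with $\widehat{A}\widehat{G}\widehat{A}=\widehat{A}$, $\widehat{G}\widehat{A}\widehat{G}=\widehat{G}$, $\widehat{A}\widehat{G}=\widehat{G}\widehat{A}$. D-group order: when $\widehat{X}^{\#}$ exists, $\widehat{X}\leq_{D}^{\#}\widehat{Y}$ means $\widehat{X}^{\#}\widehat{X}=\widehat{X}^{\#}\widehat{Y}$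 and $\widehat{X}\widehat{X}^{\#}=\widehat{Y}\widehat{X}^{\#}$. Group partial order on real matrices: $X\leq^{\#}Y$ means $X^{\#}X=X^{\#}Y$ and $XX^{\#}=YX^{\#}$. *)

theory Defs
  imports "HOL-Analysis.Analysis"
begin

text \<open>Real n x n matrices are rendered as real^'n^'n. A dual matrix A + eps B is
represented by the pair (A, B); a dual vector x + eps y by the pair (x, y).\<close>

type_synonym 'n dmat = "(real^'n^'n) \<times> (real^'n^'n)"
type_synonym 'n dvec = "(real^'n) \<times> (real^'n)"

definition dmult :: "'n::finite dmat \<Rightarrow> 'n dmat \<Rightarrow> 'n dmat" where
  "dmult P Q = (fst P ** fst Q, fst P ** snd Q + snd P ** fst Q)"

definition dmv :: "'n::finite dmat \<Rightarrow> 'n dvec \<Rightarrow> 'n dvec" where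
  "dmv P z = (fst P *v fst z, fst P *v snd z + snd P *v fst z)"

definition dual_index_one :: "'n::finite dmat \<Rightarrow> bool" where
  "dual_index_one A \<longleftrightarrow> range (dmv A) = range (dmv (dmult A A))"

definition is_dual_group_inverse :: "'n::finite dmat \<Rightarrow> 'n dmat \<Rightarrow> bool" where
  "is_dual_group_inverse A G \<longleftrightarrow>
     dmult (dmult A G) A = A \<and> dmult (dmult G A) G = G \<and> dmult A G = dmult G A"

definition dual_group_inv :: "'n::finite dmat \<Rightarrow> 'n dmat" where
  "dual_group_inv A = (THE G. is_dual_group_inverse A G)"

definition D_group_le :: "'n::finite dmat \<Rightarrow> 'n dmat \<Rightarrow> bool" where
  "D_group_le X Y \<longleftrightarrow>
     dmult (dual_group_inv X) X = dmult (dual_group_inv X) Y \<and>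
     dmult X (dual_group_inv X) = dmult Y (dual_group_inv X)"

definition is_group_inverse :: "real^'n^'n \<Rightarrow> real^'n^'n \<Rightarrow> bool" where
  "is_group_inverse X G \<longleftrightarrow> X ** G ** X = X \<and> G ** X ** G = G \<and> X ** G = G ** X"

definition group_inv :: "real^'n^'n \<Rightarrow> real^'n^'n" where
  "group_inv X = (THE G. is_group_inverse X G)"

definition group_le :: "real^'n^'n \<Rightarrow> real^'n^'n \<Rightarrow> bool" where
  "group_le X Y \<longleftrightarrow> group_inv X ** X = group_inv X ** Y \<and> X ** group_inv X = Y ** group_inv X"

end

theory Submission
  imports Defs
begin

text \<open>The real part of the equations defining a dual group inverse (G, H) of A + \<epsilon>B
says that G is the group inverse of A, so G = A#. Splitting H along the complementary
idempotents P = A A# and Q = I - P, the dual parts of the three equations, multiplied by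
G and Q on either side, determine the four blocks P H P, P H Q, Q H P, Q H Q; adding them up gives
H = R. Expanding the D-group order with \<epsilon>^2 = 0 and the dual group inverse (A#, R)
then yields exactly the three stated conditions.\<close>

lemma matrix_add_rdistrib: "((A::'a::ring_1^'n^'m) + B) ** C = A ** C + B ** C"
  by (simp add: matrix_matrix_mult_def vec_eq_iff sum.distrib algebra_simps)

lemma matrix_diff_ldistrib: "(A::'a::ring_1^'n^'m) ** (B - C) = A ** B - A ** C"
  by (simp add: matrix_matrix_mult_def vec_eq_iff sum_subtractf algebra_simps)

lemma matrix_diff_rdistrib: "((A::'a::ring_1^'n^'m) - B) ** C = A ** C - B ** C"
  by (simp add: matrix_matrix_mult_def vec_eq_iff sum_subtractf algebra_simps)

lemma matrix_split_by_complement: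
  fixes H P :: "'a::ring_1^'n^'n"
  shows "H = P ** H ** P + P ** H ** (mat 1 - P) + (mat 1 - P) ** H ** P + (mat 1 - P) ** H ** (mat 1 - P)"
  by (simp add: matrix_diff_ldistrib matrix_diff_rdistrib)

lemma is_group_inverse_unique:
  assumes "is_group_inverse A G" "is_group_inverse A G'"
  shows "G = G'"
proof -
  have G: "A ** G ** A = A" "G ** A ** G = G" "A ** G = G ** A"
    and G': "A ** G' ** A = A" "G' ** A ** G' = G'" "A ** G' = G' ** A"
    using assms by (auto simp: is_group_inverse_def)
  have "A ** G = (A ** G' ** A) ** G" using G' by simp
  also have "\<dots> = G' ** (A ** G ** A)" using G G' by (metis matrix_mul_assoc)
  also have "\<dots> = A ** G'" using G G' by simp
  finally have AG: "A ** G = A ** G'" .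
  have "G = G ** (A ** G)" using G by (metis matrix_mul_assoc)
  also have "\<dots> = G ** (A ** G')" using AG by simp
  also have "\<dots> = G'" using G G' AG by (metis matrix_mul_assoc)
  finally show ?thesis .
qed

lemma group_inv_eqI: "is_group_inverse A G \<Longrightarrow> group_inv A = G"
  unfolding group_inv_def using is_group_inverse_unique by blast

definition group_inv_dual_part :: "real^'n^'n \<Rightarrow> real^'n^'n \<Rightarrow> real^'n^'n" where
  "group_inv_dual_part A B =
    (let G = group_inv A
     in - (G ** B ** G) + (G ** G) ** B ** (mat 1 - A ** G) + (mat 1 - A ** G) ** B ** (G ** G))"

lemma is_dual_group_inverse_iff:
  "is_dual_group_inverse (A, B) (G, H) \<longleftrightarrow>
     is_group_inverse A G \<and>
     A ** G ** B + (A ** H + B ** G) ** A = B \<and>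
     G ** A ** H + (G ** B + H ** A) ** G = H \<and>
     A ** H + B ** G = G ** B + H ** A"
  by (auto simp: is_dual_group_inverse_def is_group_inverse_def dmult_def)

lemma dual_part_eq_of_group_inverse:
  fixes A B G H :: "real^'n^'n"
  assumes "is_group_inverse A G"
    and e1: "A ** G ** B + (A ** H + B ** G) ** A = B"
    and e2: "G ** A ** H + (G ** B + H ** A) ** G = H"
    and e3: "A ** H + B ** G = G ** B + H ** A"
  shows "H = - (G ** B ** G) + (G ** G) ** B ** (mat 1 - A ** G) + (mat 1 - A ** G) ** B ** (G ** G)"
proof -
  have AGA: "A ** G ** A = A" and GAG: "G ** A ** G = G" and comm: "A ** G = G ** A"
    using assms(1) by (auto simp: is_group_inverse_def)
  define P where "P = A ** G"
  define Q where "Q = mat 1 - P"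
  have PA: "P ** A = A" and AP: "A ** P = A" and PG: "P ** G = G" and GP: "G ** P = G"
    unfolding P_def using AGA GAG comm by (metis matrix_mul_assoc)+
  have QA: "Q ** A = 0" and AQ: "A ** Q = 0" and QG: "Q ** G = 0" and GQ: "G ** Q = 0"
    unfolding Q_def using PA AP PG GP by (simp_all add: matrix_diff_ldistrib matrix_diff_rdistrib)
  have PHP: "P ** H ** P = - (G ** B ** G)"
  proof -
    have "P ** B + A ** H ** A + B ** P = B"
      using e1 comm unfolding P_def by (simp add: matrix_add_rdistrib matrix_mul_assoc add.assoc)
    then have "G ** (P ** B) ** G + G ** (A ** H ** A) ** G + G ** (B ** P) ** G = G ** B ** G"
      by (metis matrix_add_ldistrib matrix_add_rdistrib)
    moreover have "G ** (P ** B) ** G = G ** B ** G" "G ** (B ** P) ** G = G ** B ** G"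
      using GP PG by (metis matrix_mul_assoc)+
    moreover have "G ** (A ** H ** A) ** G = P ** H ** P"
      using comm unfolding P_def by (metis matrix_mul_assoc)
    ultimately have "G ** B ** G + P ** H ** P + G ** B ** G = G ** B ** G"
      by simp
    then show ?thesis
      by (simp add: eq_neg_iff_add_eq_0 add.commute)
  qed
  have QHQ: "Q ** H ** Q = 0"
  proof -
    have "Q ** (G ** A ** H) ** Q + Q ** (G ** B ** G) ** Q + Q ** (H ** A ** G) ** Q = Q ** H ** Q"
      using e2 by (metis matrix_add_ldistrib matrix_add_rdistrib add.assoc)
    moreover have "Q ** (G ** A ** H) ** Q = 0" "Q ** (G ** B ** G) ** Q = 0" "Q ** (H ** A ** G) ** Q = 0"
      using QG GQ by (metis matrix_mul_assoc times0_left times0_right)+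
    ultimately show ?thesis by simp
  qed
  have PHQ: "P ** H ** Q = (G ** G) ** B ** Q"
  proof -
    have "G ** (A ** H) ** Q + G ** (B ** G) ** Q = G ** (G ** B) ** Q + G ** (H ** A) ** Q"
      using e3 by (metis matrix_add_ldistrib matrix_add_rdistrib)
    moreover have "G ** (A ** H) ** Q = P ** H ** Q"
      using comm unfolding P_def by (metis matrix_mul_assoc)
    moreover have "G ** (B ** G) ** Q = 0" "G ** (H ** A) ** Q = 0"
      using GQ AQ by (metis matrix_mul_assoc times0_right)+
    ultimately show ?thesis by (simp add: matrix_mul_assoc)
  qed
  have QHP: "Q ** H ** P = Q ** B ** (G ** G)"
  proof -
    have "Q ** (A ** H) ** G + Q ** (B ** G) ** G = Q ** (G ** B) ** G + Q ** (H ** A) ** G"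
      using e3 by (metis matrix_add_ldistrib matrix_add_rdistrib)
    moreover have "Q ** (H ** A) ** G = Q ** H ** P"
      unfolding P_def by (metis matrix_mul_assoc)
    moreover have "Q ** (A ** H) ** G = 0" "Q ** (G ** B) ** G = 0"
      using QA QG by (metis matrix_mul_assoc times0_left)+
    ultimately show ?thesis by (simp add: matrix_mul_assoc)
  qed
  have "H = P ** H ** P + P ** H ** Q + Q ** H ** P + Q ** H ** Q"
    unfolding Q_def by (rule matrix_split_by_complement)
  also have "\<dots> = - (G ** B ** G) + (G ** G) ** B ** Q + Q ** B ** (G ** G)"
    using PHP PHQ QHP QHQ by simp
  finally show ?thesis
    unfolding Q_def P_def .
qed

lemma dual_group_inverse_eq:
  assumes "is_dual_group_inverse (A, B) K"
  shows "K = (group_inv A, group_inv_dual_part A B)"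
proof (cases K)
  case (Pair G H)
  have G: "is_group_inverse A G" and dual_eqs:
      "A ** G ** B + (A ** H + B ** G) ** A = B"
      "G ** A ** H + (G ** B + H ** A) ** G = H"
      "A ** H + B ** G = G ** B + H ** A"
    using assms unfolding Pair is_dual_group_inverse_iff by blast+
  show ?thesis
    using Pair dual_part_eq_of_group_inverse[OF G dual_eqs] group_inv_eqI[OF G]
    by (simp add: group_inv_dual_part_def)
qed

lemma dual_group_inv_eq:
  assumes "\<exists>K. is_dual_group_inverse (A, B) K"
  shows "dual_group_inv (A, B) = (group_inv A, group_inv_dual_part A B)"
  unfolding dual_group_inv_def
  using assms dual_group_inverse_eq by (metis the_equality)

theorem mainTheorem11:
  fixes X X0 Y Y0 :: "real^'n^'n"
  assumes "dual_index_one (X, X0)"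
    and "\<exists>G. is_dual_group_inverse (X, X0) G"
  shows "D_group_le (X, X0) (Y, Y0) \<longleftrightarrow>
    (let Xg = group_inv X;
         R = - (Xg ** X0 ** Xg) + (Xg ** Xg) ** X0 ** (mat 1 - X ** Xg)
             + (mat 1 - X ** Xg) ** X0 ** (Xg ** Xg)
     in group_le X Y \<and>
        Xg ** X0 + R ** X = Xg ** Y0 + R ** Y \<and>
        X ** R + X0 ** Xg = Y ** R + Y0 ** Xg)"
  using dual_group_inv_eq[OF assms(2)]
  by (auto simp: D_group_le_def dmult_def group_le_def group_inv_dual_part_def Let_def)

end
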